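(* Let $g(t)=\sum_{n\ge0}g_nt^n$ be a formal power series with $g_0=1$ and $f(t)=\sum_{n\ge1}f_nt^n$ a formal power series with $f_1\neq0$. Put $z_0=f_1$, $w_0=g_1$ and define the formal power series \[ Z(t)=\frac{f(t)-z_0t\,g(t)}{f(t)}+z_0=\sum_{k\ge0}z_kt^k,\qquad W(t)=\frac{(1-w_0t)g(t)-1}{f(t)}+w_0=\sum_{k\ge0}w_kt^k . \] Let $J=(J_{i,j})_{i,j\ge0}$ be the infinite matrix with $J_{i,0}=w_i$, $J_{i,1}=z_i$ for all $i\ge0$, $J_{i,i+1}=1$ for $i\ge1$, and all other entries $0$; i.e. \[ J=\begin{bmatrix} w_0&z_0&&&\\ w_1&z_1&1&&\\ w_2&z_2&0&1&\\ w_3&z_3&0&0&1\\ \vdots&\vdots&&&&\ddots\end{bmatrix}. \] Then $[g,f]\,J=\overline{[g,f]}$, where $\overline{[g,f]}$ denotes the matrix obtained from the quasi-Riordan array $[g,f]$ by deleting its first (i.e. $0$th) row.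
   Context: The quasi-Riordan array $[g,f]$ is the infinite lower triangular matrix $(r_{n,k})_{n,k\ge0}$ whose $0$th column has generating function $g$ and whose $k$th column ($k\ge1$) has generating function $t^{k-1}f(t)$, i.e. $r_{n,0}=g_n$ and $r_{n,k}=f_{n-k+1}$ for $k\ge1$ (with $f_j=0$ for $j\le0$). (Under the stated choices of $z_0,w_0$, the expressions defining $Z$ and $W$ are genuine formal power series.) *)

theory Defs
  imports "HOL-Computational_Algebra.Formal_Power_Series"
begin

text \<open>Quasi-Riordan array [g,f]: column 0 has g.f. g, column k>=1 has g.f. t^(k-1) f(t),
  i.e. r(n,0) = g_n and r(n,k) = f_(n-k+1) for k>=1, with f_j = 0 for j <= 0.\<close>
definition quasi_riordan :: "'a::field fps \<Rightarrow> 'a fps \<Rightarrow> nat \<Rightarrow> nat \<Rightarrow> 'a" where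
  "quasi_riordan g f n k =
     (if k = 0 then fps_nth g n else if k \<le> n then fps_nth f (n + 1 - k) else 0)"

text \<open>Product of an infinite lower triangular matrix A with an arbitrary infinite matrix B:
  (A B)(n,j) = sum over k of A(n,k) B(k,j); since A(n,k)=0 for k>n the sum is over k<=n.\<close>
definition lt_mat_mult :: "(nat \<Rightarrow> nat \<Rightarrow> 'a::comm_ring_1) \<Rightarrow> (nat \<Rightarrow> nat \<Rightarrow> 'a) \<Rightarrow> nat \<Rightarrow> nat \<Rightarrow> 'a" where
  "lt_mat_mult A B n j = (\<Sum>k\<le>n. A n k * B k j)"

definition Zser :: "'a::field fps \<Rightarrow> 'a fps \<Rightarrow> 'a fps" where
  "Zser g f = (f - fps_const (fps_nth f 1) * fps_X * g) / f + fps_const (fps_nth f 1)"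

definition Wser :: "'a::field fps \<Rightarrow> 'a fps \<Rightarrow> 'a fps" where
  "Wser g f = ((1 - fps_const (fps_nth g 1) * fps_X) * g - 1) / f + fps_const (fps_nth g 1)"

definition Jmat :: "'a::field fps \<Rightarrow> 'a fps \<Rightarrow> nat \<Rightarrow> nat \<Rightarrow> 'a" where
  "Jmat g f i j =
     (if j = 0 then fps_nth (Wser g f) i
      else if j = 1 then fps_nth (Zser g f) i
      else if i \<ge> 1 \<and> j = i + 1 then 1 else 0)"

end

theory Submission
  imports Defs
begin

unbundle fps_syntax

text \<open>Row \<open>n\<close> of \<open>[g,f]\<close> pairs \<open>g\<^sub>n\<close> with the \<open>0\<close>th entry of a column and
  \<open>f\<^sub>n, \<dots>, f\<^sub>1\<close> with the entries \<open>1, \<dots>, n\<close>, so multiplying \<open>[g,f]\<close> by a column with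
  generating function \<open>S\<close> gives the shifted coefficients of \<open>f (S - s\<^sub>0) + s\<^sub>0 t g\<close>.
  For the two columns of \<open>J\<close> this series is \<open>g - 1\<close> (for \<open>S = W\<close>) and \<open>f\<close> (for \<open>S = Z\<close>),
  precisely the generating functions of columns \<open>0\<close> and \<open>1\<close> of \<open>[g,f]\<close> with the \<open>0\<close>th row
  removed; the remaining columns of \<open>J\<close> just shift the columns of \<open>t\<^sup>k f\<close> down by one.
  The choice \<open>z\<^sub>0 = f\<^sub>1\<close>, \<open>w\<^sub>0 = g\<^sub>1\<close> makes the numerators of \<open>Z\<close> and \<open>W\<close> vanish to
  order two, so that the divisions by \<open>f\<close> are exact and \<open>Z\<^sub>0 = z\<^sub>0\<close>, \<open>W\<^sub>0 = w\<^sub>0\<close>.\<close>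

lemma fps_times_divide_order_1:
  fixes a f :: "'a::field fps"
  assumes "f $ 0 = 0" and "f $ 1 \<noteq> 0" and "a $ 0 = 0"
  shows "f * (a / f) = a"
proof (cases "a = 0")
  case False
  have "subdegree f = 1" using assms(1,2) by (intro subdegreeI) auto
  moreover have "subdegree a \<ge> 1" using False assms(3) by (intro subdegree_geI) auto
  moreover have "f \<noteq> 0" using assms(2) by auto
  ultimately show ?thesis
    using fps_times_divide_eq[of f a] by (simp add: mult.commute)
qed simp

lemma fps_divide_order_1_nth_0:
  fixes a f :: "'a::field fps"
  assumes "f $ 0 = 0" and "f $ 1 \<noteq> 0" and "a $ 0 = 0"
  shows "(a / f) $ 0 = a $ 1 / f $ 1"
proof -
  have "a $ 1 = (f * (a / f)) $ 1" using fps_times_divide_order_1[OF assms] by simp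
  also have "\<dots> = f $ 1 * (a / f) $ 0" using assms(1) by (simp add: fps_mult_nth_1)
  finally show ?thesis using assms(2) by simp
qed

lemma lt_mat_mult_quasi_riordan_column:
  fixes g f S :: "'a::field fps"
  assumes "f $ 0 = 0" and "\<And>k. C k j = S $ k"
  shows "lt_mat_mult (quasi_riordan g f) C n j
    = (f * (S - fps_const (S $ 0)) + fps_const (S $ 0) * fps_X * g) $ Suc n"
proof -
  have "(f * S) $ Suc n = (\<Sum>k=0..n. S $ k * f $ (Suc n - k))"
    using assms(1) by (simp add: mult.commute[of f] fps_mult_nth)
  then have fS: "(f * S) $ Suc n = f $ Suc n * S $ 0 + (\<Sum>k=1..n. f $ (Suc n - k) * S $ k)"
    by (simp add: sum.atLeast_Suc_atMost mult.commute)
  have "lt_mat_mult (quasi_riordan g f) C n j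
      = g $ n * S $ 0 + (\<Sum>k=1..n. f $ (Suc n - k) * S $ k)"
    unfolding lt_mat_mult_def
    by (simp add: assms(2) atMost_atLeast0 sum.atLeast_Suc_atMost quasi_riordan_def)
  also have "\<dots> = (f * (S - fps_const (S $ 0)) + fps_const (S $ 0) * fps_X * g) $ Suc n"
    using fS by (simp add: algebra_simps mult.assoc)
  finally show ?thesis .
qed

lemma Wser_nth_0:
  fixes g f :: "'a::field fps"
  assumes "g $ 0 = 1" and "f $ 0 = 0" and "f $ 1 \<noteq> 0"
  shows "Wser g f $ 0 = g $ 1"
  using fps_divide_order_1_nth_0[OF assms(2,3), of "(1 - fps_const (g $ 1) * fps_X) * g - 1"]
    assms(1) by (simp add: Wser_def fps_mult_nth_1)

lemma Zser_nth_0: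
  fixes g f :: "'a::field fps"
  assumes "g $ 0 = 1" and "f $ 0 = 0" and "f $ 1 \<noteq> 0"
  shows "Zser g f $ 0 = f $ 1"
  using fps_divide_order_1_nth_0[OF assms(2,3), of "f - fps_const (f $ 1) * fps_X * g"]
    assms by (simp add: Zser_def fps_mult_nth_1)

lemma lt_mat_mult_quasi_riordan_Jmat_0:
  fixes g f :: "'a::field fps"
  assumes "g $ 0 = 1" and "f $ 0 = 0" and "f $ 1 \<noteq> 0"
  shows "lt_mat_mult (quasi_riordan g f) (Jmat g f) n 0 = g $ Suc n"
proof -
  let ?w0 = "fps_const (g $ 1)"
  have "f * (Wser g f - ?w0) = (1 - ?w0 * fps_X) * g - 1"
    using fps_times_divide_order_1[OF assms(2,3)] assms(1) by (simp add: Wser_def)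
  then have W: "f * (Wser g f - ?w0) + ?w0 * fps_X * g = g - 1"
    by (simp add: algebra_simps)
  have "lt_mat_mult (quasi_riordan g f) (Jmat g f) n 0
      = (f * (Wser g f - fps_const (Wser g f $ 0))
          + fps_const (Wser g f $ 0) * fps_X * g) $ Suc n"
    by (rule lt_mat_mult_quasi_riordan_column[OF assms(2)]) (simp add: Jmat_def)
  then show ?thesis unfolding Wser_nth_0[OF assms] W by simp
qed

lemma lt_mat_mult_quasi_riordan_Jmat_1:
  fixes g f :: "'a::field fps"
  assumes "g $ 0 = 1" and "f $ 0 = 0" and "f $ 1 \<noteq> 0"
  shows "lt_mat_mult (quasi_riordan g f) (Jmat g f) n 1 = f $ Suc n"
proof -
  let ?z0 = "fps_const (f $ 1)"
  have "f * (Zser g f - ?z0) = f - ?z0 * fps_X * g"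
    using fps_times_divide_order_1[OF assms(2,3)] assms by (simp add: Zser_def)
  then have Z: "f * (Zser g f - ?z0) + ?z0 * fps_X * g = f"
    by simp
  have "lt_mat_mult (quasi_riordan g f) (Jmat g f) n 1
      = (f * (Zser g f - fps_const (Zser g f $ 0))
          + fps_const (Zser g f $ 0) * fps_X * g) $ Suc n"
    by (rule lt_mat_mult_quasi_riordan_column[OF assms(2)]) (simp add: Jmat_def)
  then show ?thesis unfolding Zser_nth_0[OF assms] Z .
qed

lemma lt_mat_mult_quasi_riordan_Jmat_shift:
  fixes g f :: "'a::field fps"
  assumes "j \<ge> 2"
  shows "lt_mat_mult (quasi_riordan g f) (Jmat g f) n j = quasi_riordan g f n (j - 1)"
proof -
  have "lt_mat_mult (quasi_riordan g f) (Jmat g f) n j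
      = (\<Sum>k\<le>n. if k = j - 1 then quasi_riordan g f n k else 0)"
    unfolding lt_mat_mult_def using assms by (intro sum.cong) (auto simp: Jmat_def)
  also have "\<dots> = quasi_riordan g f n (j - 1)"
    using assms by (simp add: quasi_riordan_def)
  finally show ?thesis .
qed

theorem proposition3p1:
  fixes g f :: "'a::field fps"
  assumes "fps_nth g 0 = 1" and "fps_nth f 0 = 0" and "fps_nth f 1 \<noteq> 0"
  shows "\<forall>n j. lt_mat_mult (quasi_riordan g f) (Jmat g f) n j = quasi_riordan g f (n + 1) j"
proof (intro allI)
  fix n j :: nat
  consider "j = 0" | "j = 1" | "j \<ge> 2" by linarith
  then show "lt_mat_mult (quasi_riordan g f) (Jmat g f) n j = quasi_riordan g f (n + 1) j"
  proof cases
    case 1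
    then show ?thesis
      using lt_mat_mult_quasi_riordan_Jmat_0[OF assms] by (simp add: quasi_riordan_def)
  next
    case 2
    then show ?thesis
      using lt_mat_mult_quasi_riordan_Jmat_1[OF assms] by (simp add: quasi_riordan_def)
  next
    case 3
    then show ?thesis
      using lt_mat_mult_quasi_riordan_Jmat_shift[of j g f n]
      by (auto simp: quasi_riordan_def Suc_diff_le)
  qed
qed

end
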